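(* Let $M$ be an $\aleph_0$-saturated model of a complete affine theory $T$. Then a predicate $P:M^n\to\mathbb R$ is definable if and only if both $P$ and $-P$ have type-definable epigraphs.
   Context: Affine continuous logic: $L$-structures are complete metric spaces $(M,d)$ with $d\le1$ and Lipschitz interpretations of function symbols and $[0,1]$-valued relation symbols. Affine formulas are built from $1$ and atomic formulas (including $d$) using only $r\cdot\phi$ ($r\in\mathbb R$), $\phi+\psi$, $\inf_x$, $\sup_x$. $M$ is $\aleph_0$-saturated if every type over a finite subset of $M$ (maximal set of conditions with those parameters satisfiable with the theory of $M$ with those parameters named) is realized in $M$. A predicate $P:M^n\to\mathbb R$ is definable (without parameters) if there are affine formulas $\phi_k(\bar x)$ with $\phi_k^M\to P$ uniformly on $M^n$. The epigraph of $P$ is $\mathrm{epi}(P)=\{(\bar a,r)\in M^n\times\mathbb R:P(\bar a)\le r\}$. $P$ has a type-definable epigraph if there is a set $\Phi(\bar x)$ of affine formulas (without parameters) such that $\mathrm{epi}(P)=\{(\bar a,r):\phi^M(\bar a)\le r\text{ for every }\phi\in\Phi\}$. *)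

theory Defs
  imports Complex_Main
begin

record ('f, 'r) lang =
  farity :: "'f \<Rightarrow> nat"
  rarity :: "'r \<Rightarrow> nat"

datatype 'f trm = Var nat | Fn 'f "'f trm list"

datatype ('f, 'r) afml =
    One
  | Rel 'r "'f trm list"
  | Dst "'f trm" "'f trm"
  | Scl real "('f, 'r) afml"
  | Plus "('f, 'r) afml" "('f, 'r) afml"
  | Inf nat "('f, 'r) afml"
  | Sup nat "('f, 'r) afml"

fun wf_trm :: "('f, 'r) lang \<Rightarrow> 'f trm \<Rightarrow> bool" where
  "wf_trm L (Var i) = True"
| "wf_trm L (Fn f ts) = (length ts = farity L f \<and> (\<forall>t\<in>set ts. wf_trm L t))"

fun wf_fml :: "('f, 'r) lang \<Rightarrow> ('f, 'r) afml \<Rightarrow> bool" where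
  "wf_fml L One = True"
| "wf_fml L (Rel r ts) = (length ts = rarity L r \<and> (\<forall>t\<in>set ts. wf_trm L t))"
| "wf_fml L (Dst s t) = (wf_trm L s \<and> wf_trm L t)"
| "wf_fml L (Scl c \<phi>) = wf_fml L \<phi>"
| "wf_fml L (Plus \<phi> \<psi>) = (wf_fml L \<phi> \<and> wf_fml L \<psi>)"
| "wf_fml L (Inf x \<phi>) = wf_fml L \<phi>"
| "wf_fml L (Sup x \<phi>) = wf_fml L \<phi>"

fun fv_trm :: "'f trm \<Rightarrow> nat set" where
  "fv_trm (Var i) = {i}"
| "fv_trm (Fn f ts) = (\<Union>t\<in>set ts. fv_trm t)"

fun fv :: "('f, 'r) afml \<Rightarrow> nat set" where
  "fv One = {}"
| "fv (Rel r ts) = (\<Union>t\<in>set ts. fv_trm t)"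
| "fv (Dst s t) = fv_trm s \<union> fv_trm t"
| "fv (Scl c \<phi>) = fv \<phi>"
| "fv (Plus \<phi> \<psi>) = fv \<phi> \<union> fv \<psi>"
| "fv (Inf x \<phi>) = fv \<phi> - {x}"
| "fv (Sup x \<phi>) = fv \<phi> - {x}"

record ('a, 'f, 'r) struct =
  carr :: "'a set"
  dst :: "'a \<Rightarrow> 'a \<Rightarrow> real"
  fun_i :: "'f \<Rightarrow> 'a list \<Rightarrow> 'a"
  rel_i :: "'r \<Rightarrow> 'a list \<Rightarrow> real"

definition tuple_dist :: "('a \<Rightarrow> 'a \<Rightarrow> real) \<Rightarrow> 'a list \<Rightarrow> 'a list \<Rightarrow> real" where
  "tuple_dist d xs ys = Max (insert 0 {d (xs ! i) (ys ! i) | i. i < length xs})"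

definition tuples :: "('a, 'f, 'r) struct \<Rightarrow> nat \<Rightarrow> 'a list set" where
  "tuples M n = {xs. set xs \<subseteq> carr M \<and> length xs = n}"

definition is_structure :: "('f, 'r) lang \<Rightarrow> ('a, 'f, 'r) struct \<Rightarrow> bool" where
  "is_structure L M \<longleftrightarrow>
     carr M \<noteq> {}
   \<and> (\<forall>x\<in>carr M. \<forall>y\<in>carr M. 0 \<le> dst M x y \<and> dst M x y \<le> 1
        \<and> (dst M x y = 0 \<longleftrightarrow> x = y) \<and> dst M x y = dst M y x)
   \<and> (\<forall>x\<in>carr M. \<forall>y\<in>carr M. \<forall>z\<in>carr M. dst M x z \<le> dst M x y + dst M y z)
   \<and> (\<forall>s :: nat \<Rightarrow> 'a. (\<forall>k. s k \<in> carr M) \<longrightarrow>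
        (\<forall>\<epsilon>>0. \<exists>N. \<forall>j\<ge>N. \<forall>k\<ge>N. dst M (s j) (s k) < \<epsilon>) \<longrightarrow>
        (\<exists>x\<in>carr M. \<forall>\<epsilon>>0. \<exists>N. \<forall>k\<ge>N. dst M (s k) x < \<epsilon>))
   \<and> (\<forall>f. (\<forall>xs\<in>tuples M (farity L f). fun_i M f xs \<in> carr M)
        \<and> (\<exists>C. \<forall>xs\<in>tuples M (farity L f). \<forall>ys\<in>tuples M (farity L f).
              dst M (fun_i M f xs) (fun_i M f ys) \<le> C * tuple_dist (dst M) xs ys))
   \<and> (\<forall>r. (\<forall>xs\<in>tuples M (rarity L r). 0 \<le> rel_i M r xs \<and> rel_i M r xs \<le> 1)
        \<and> (\<exists>C. \<forall>xs\<in>tuples M (rarity L r). \<forall>ys\<in>tuples M (rarity L r).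
              \<bar>rel_i M r xs - rel_i M r ys\<bar> \<le> C * tuple_dist (dst M) xs ys))"

fun eval_trm :: "('a, 'f, 'r) struct \<Rightarrow> (nat \<Rightarrow> 'a) \<Rightarrow> 'f trm \<Rightarrow> 'a" where
  "eval_trm M \<sigma> (Var i) = \<sigma> i"
| "eval_trm M \<sigma> (Fn f ts) = fun_i M f (map (eval_trm M \<sigma>) ts)"

fun eval :: "('a, 'f, 'r) struct \<Rightarrow> (nat \<Rightarrow> 'a) \<Rightarrow> ('f, 'r) afml \<Rightarrow> real" where
  "eval M \<sigma> One = 1"
| "eval M \<sigma> (Rel r ts) = rel_i M r (map (eval_trm M \<sigma>) ts)"
| "eval M \<sigma> (Dst s t) = dst M (eval_trm M \<sigma> s) (eval_trm M \<sigma> t)"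
| "eval M \<sigma> (Scl c \<phi>) = c * eval M \<sigma> \<phi>"
| "eval M \<sigma> (Plus \<phi> \<psi>) = eval M \<sigma> \<phi> + eval M \<sigma> \<psi>"
| "eval M \<sigma> (Inf x \<phi>) = (INF b\<in>carr M. eval M (\<sigma>(x := b)) \<phi>)"
| "eval M \<sigma> (Sup x \<phi>) = (SUP b\<in>carr M. eval M (\<sigma>(x := b)) \<phi>)"

definition asg :: "('a, 'f, 'r) struct \<Rightarrow> 'a list \<Rightarrow> nat \<Rightarrow> 'a" where
  "asg M xs i = (if i < length xs then xs ! i else (SOME a. a \<in> carr M))"

text \<open>A condition "phi(x_0..x_{m-1}, a_0..a_{k-1}) <= r" with parameters as = [a_0..a_{k-1}]
  is a pair (phi, r), where variables 0..m-1 are the type variables and m..m+k-1 the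
  parameters.\<close>
definition cond_ok :: "('f, 'r) lang \<Rightarrow> nat \<Rightarrow> nat \<Rightarrow> ('f, 'r) afml \<times> real \<Rightarrow> bool" where
  "cond_ok L m k c \<longleftrightarrow> wf_fml L (fst c) \<and> fv (fst c) \<subseteq> {..<m + k}"

text \<open>Satisfiability of a set of conditions with the (complete affine) theory of M with the
  parameters named: for every finite subset and nonnegative weights, the infimum over M^m of the
  weighted sum of (phi - r) is <= 0 (affine compactness).\<close>
definition consistent_with :: "('a, 'f, 'r) struct \<Rightarrow> nat \<Rightarrow> 'a list \<Rightarrow>
    (('f, 'r) afml \<times> real) set \<Rightarrow> bool" where
  "consistent_with M m as \<Sigma> \<longleftrightarrow>
     (\<forall>F w. F \<subseteq> \<Sigma> \<longrightarrow> finite F \<longrightarrow> (\<forall>c\<in>F. 0 \<le> (w c :: real)) \<longrightarrow>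
        (INF bs\<in>tuples M m. \<Sum>c\<in>F. w c * (eval M (asg M (bs @ as)) (fst c) - snd c)) \<le> 0)"

definition is_type :: "('f, 'r) lang \<Rightarrow> ('a, 'f, 'r) struct \<Rightarrow> nat \<Rightarrow> 'a list \<Rightarrow>
    (('f, 'r) afml \<times> real) set \<Rightarrow> bool" where
  "is_type L M m as \<Sigma> \<longleftrightarrow>
     (\<forall>c\<in>\<Sigma>. cond_ok L m (length as) c) \<and> consistent_with M m as \<Sigma>
   \<and> (\<forall>\<Sigma>'. \<Sigma> \<subseteq> \<Sigma>' \<longrightarrow> (\<forall>c\<in>\<Sigma>'. cond_ok L m (length as) c) \<longrightarrow>
        consistent_with M m as \<Sigma>' \<longrightarrow> \<Sigma>' = \<Sigma>)"

definition aleph0_saturated :: "('f, 'r) lang \<Rightarrow> ('a, 'f, 'r) struct \<Rightarrow> bool" where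
  "aleph0_saturated L M \<longleftrightarrow>
     (\<forall>m as \<Sigma>. set as \<subseteq> carr M \<longrightarrow> is_type L M m as \<Sigma> \<longrightarrow>
        (\<exists>bs\<in>tuples M m. \<forall>c\<in>\<Sigma>. eval M (asg M (bs @ as)) (fst c) \<le> snd c))"

definition definable :: "('f, 'r) lang \<Rightarrow> ('a, 'f, 'r) struct \<Rightarrow> nat \<Rightarrow> ('a list \<Rightarrow> real) \<Rightarrow> bool" where
  "definable L M n P \<longleftrightarrow>
     (\<exists>\<phi> :: nat \<Rightarrow> ('f, 'r) afml.
        (\<forall>k. wf_fml L (\<phi> k) \<and> fv (\<phi> k) \<subseteq> {..<n})
      \<and> (\<forall>\<epsilon>>0. \<exists>K. \<forall>k\<ge>K. \<forall>xs\<in>tuples M n. \<bar>eval M (asg M xs) (\<phi> k) - P xs\<bar> < \<epsilon>))"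

definition type_definable_epigraph :: "('f, 'r) lang \<Rightarrow> ('a, 'f, 'r) struct \<Rightarrow> nat \<Rightarrow>
    ('a list \<Rightarrow> real) \<Rightarrow> bool" where
  "type_definable_epigraph L M n P \<longleftrightarrow>
     (\<exists>\<Phi> :: ('f, 'r) afml set.
        (\<forall>\<phi>\<in>\<Phi>. wf_fml L \<phi> \<and> fv \<phi> \<subseteq> {..<n})
      \<and> (\<forall>xs\<in>tuples M n. \<forall>r::real. P xs \<le> r \<longleftrightarrow> (\<forall>\<phi>\<in>\<Phi>. eval M (asg M xs) \<phi> \<le> r)))"

end

theory Submission
  imports Defs
begin

text \<open>If affine formulas \<open>\<phi>\<^sub>k\<close> converge uniformly to \<open>P\<close>, the formulas lying below \<open>P\<close>
  already have supremum \<open>P\<close>, so they cut out the epigraph of \<open>P\<close>; the same applies to \<open>-P\<close>.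
  Conversely, if \<open>\<Phi>\<close> and \<open>\<Psi>\<close> type-define the epigraphs of \<open>P\<close> and \<open>-P\<close>, then
  \<open>sup \<Phi> = P\<close> and \<open>sup \<Psi> = -P\<close>, so for \<open>\<epsilon> > 0\<close> no tuple of \<open>M\<close> satisfies all the conditions
  \<open>\<phi> + \<psi> \<le> -\<epsilon>\<close> with \<open>\<phi> \<in> \<Phi>\<close>, \<open>\<psi> \<in> \<Psi>\<close>. By \<open>\<aleph>\<^sub>0\<close>-saturation these conditions are
  inconsistent: some nonnegative combination \<open>\<Sum> w\<^sub>i (\<phi>\<^sub>i + \<psi>\<^sub>i + \<epsilon>)\<close> is positive on all
  of \<open>M\<^sup>n\<close>. Normalising the weights, the convex combination \<open>\<Sum> w\<^sub>i \<phi>\<^sub>i / \<Sum> w\<^sub>i\<close> is an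
  affine formula between \<open>P - \<epsilon>\<close> and \<open>P\<close>.\<close>

lemma carr_nonempty: "is_structure L M \<Longrightarrow> carr M \<noteq> {}"
  by (simp add: is_structure_def)

lemma eval_trm_in_carr:
  assumes "is_structure L M" and "wf_trm L t" and "\<forall>i. \<sigma> i \<in> carr M"
  shows "eval_trm M \<sigma> t \<in> carr M"
  using assms(2)
proof (induction t)
  case (Fn f ts)
  then have "map (eval_trm M \<sigma>) ts \<in> tuples M (farity L f)"
    by (auto simp: tuples_def)
  then show ?case
    using assms(1) by (auto simp: is_structure_def)
qed (use assms(3) in simp)

lemma asg_in_carr:
  assumes "is_structure L M" and "xs \<in> tuples M n"
  shows "asg M xs i \<in> carr M"
  using assms someI_ex[of "\<lambda>a. a \<in> carr M"] carr_nonempty[OF assms(1)]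
  by (auto simp: asg_def tuples_def)

lemma abs_INF_SUP_le:
  fixes f :: "'b \<Rightarrow> real"
  assumes "S \<noteq> {}" and "\<forall>b\<in>S. \<bar>f b\<bar> \<le> B"
  shows "\<bar>INF b\<in>S. f b\<bar> \<le> B" and "\<bar>SUP b\<in>S. f b\<bar> \<le> B"
proof -
  obtain b where b: "b \<in> S"
    using assms(1) by auto
  have bdd: "bdd_below (f ` S)" "bdd_above (f ` S)"
    using assms(2) by (auto intro!: bdd_belowI[of _ "-B"] bdd_aboveI[of _ B] simp: abs_le_iff)
  have "-B \<le> (INF b\<in>S. f b)" "(SUP b\<in>S. f b) \<le> B"
    using assms by (auto intro!: cINF_greatest cSUP_least simp: abs_le_iff)
  moreover have "(INF b\<in>S. f b) \<le> f b" "f b \<le> (SUP b\<in>S. f b)"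
    using bdd b by (auto intro: cINF_lower cSUP_upper)
  moreover have "\<bar>f b\<bar> \<le> B"
    using assms(2) b by blast
  ultimately show "\<bar>INF b\<in>S. f b\<bar> \<le> B" and "\<bar>SUP b\<in>S. f b\<bar> \<le> B"
    by auto
qed

lemma eval_bounded:
  assumes S: "is_structure L M" and "wf_fml L \<phi>"
  shows "\<exists>B. \<forall>\<sigma>. (\<forall>i. \<sigma> i \<in> carr M) \<longrightarrow> \<bar>eval M \<sigma> \<phi>\<bar> \<le> B"
  using assms(2)
proof (induction \<phi>)
  case One
  then show ?case by auto
next
  case (Rel r ts)
  have "\<bar>eval M \<sigma> (Rel r ts)\<bar> \<le> 1" if "\<forall>i. \<sigma> i \<in> carr M" for \<sigma>
  proof -
    have "map (eval_trm M \<sigma>) ts \<in> tuples M (rarity L r)"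
      using Rel that eval_trm_in_carr[OF S] by (auto simp: tuples_def)
    then show ?thesis
      using S by (auto simp: is_structure_def)
  qed
  then show ?case by blast
next
  case (Dst s t)
  have "\<bar>eval M \<sigma> (Dst s t)\<bar> \<le> 1" if "\<forall>i. \<sigma> i \<in> carr M" for \<sigma>
    using Dst that eval_trm_in_carr[OF S, of _ \<sigma>] S by (auto simp: is_structure_def)
  then show ?case by blast
next
  case (Scl c \<phi>)
  then obtain B where "\<forall>\<sigma>. (\<forall>i. \<sigma> i \<in> carr M) \<longrightarrow> \<bar>eval M \<sigma> \<phi>\<bar> \<le> B"
    by auto
  then show ?case
    by (intro exI[of _ "\<bar>c\<bar> * B"]) (simp add: abs_mult mult_left_mono)
next
  case (Plus \<phi> \<psi>)
  then obtain B C where "\<forall>\<sigma>. (\<forall>i. \<sigma> i \<in> carr M) \<longrightarrow> \<bar>eval M \<sigma> \<phi>\<bar> \<le> B"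
    and "\<forall>\<sigma>. (\<forall>i. \<sigma> i \<in> carr M) \<longrightarrow> \<bar>eval M \<sigma> \<psi>\<bar> \<le> C"
    by auto
  then show ?case
    by (intro exI[of _ "B + C"]) (simp add: order_trans[OF abs_triangle_ineq] add_mono)
next
  case (Inf x \<phi>)
  then obtain B where "\<forall>\<sigma>. (\<forall>i. \<sigma> i \<in> carr M) \<longrightarrow> \<bar>eval M \<sigma> \<phi>\<bar> \<le> B"
    by auto
  then show ?case
    using abs_INF_SUP_le(1)[OF carr_nonempty[OF S]] by (intro exI[of _ B]) simp
next
  case (Sup x \<phi>)
  then obtain B where "\<forall>\<sigma>. (\<forall>i. \<sigma> i \<in> carr M) \<longrightarrow> \<bar>eval M \<sigma> \<phi>\<bar> \<le> B"
    by auto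
  then show ?case
    using abs_INF_SUP_le(2)[OF carr_nonempty[OF S]] by (intro exI[of _ B]) simp
qed

lemma ex_fml_eval_sum:
  assumes "finite F" and "\<forall>c\<in>F. wf_fml L (\<phi> c) \<and> fv (\<phi> c) \<subseteq> V"
  obtains \<chi> where "wf_fml L \<chi>" "fv \<chi> \<subseteq> V" "\<And>\<sigma>. eval M \<sigma> \<chi> = (\<Sum>c\<in>F. eval M \<sigma> (\<phi> c))"
proof -
  have "\<exists>\<chi>. wf_fml L \<chi> \<and> fv \<chi> \<subseteq> V \<and> (\<forall>\<sigma>. eval M \<sigma> \<chi> = (\<Sum>c\<in>F. eval M \<sigma> (\<phi> c)))"
    using assms
  proof (induction F rule: finite_induct)
    case empty
    show ?case
      by (rule exI[of _ "Scl 0 One"]) simp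
  next
    case (insert c F)
    then obtain \<chi> where "wf_fml L \<chi>" "fv \<chi> \<subseteq> V" "\<forall>\<sigma>. eval M \<sigma> \<chi> = (\<Sum>c\<in>F. eval M \<sigma> (\<phi> c))"
      by auto
    with insert show ?case
      by (intro exI[of _ "Plus (\<phi> c) \<chi>"]) simp
  qed
  then show ?thesis
    using that by blast
qed

lemma aleph0_saturated_realizes_consistent:
  assumes sat: "aleph0_saturated L M"
    and ok: "\<forall>c\<in>\<Sigma>. cond_ok L n 0 c" and con: "consistent_with M n [] \<Sigma>"
  shows "\<exists>bs\<in>tuples M n. \<forall>c\<in>\<Sigma>. eval M (asg M bs) (fst c) \<le> snd c"
proof -
  \<comment> \<open>Saturation only realizes complete types, so first extend \<open>\<Sigma>\<close> to a maximal consistent set.\<close>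
  define A where "A = {\<Sigma>'. \<Sigma> \<subseteq> \<Sigma>' \<and> (\<forall>c\<in>\<Sigma>'. cond_ok L n 0 c) \<and> consistent_with M n [] \<Sigma>'}"
  have "\<exists>T\<in>A. \<forall>X\<in>A. T \<subseteq> X \<longrightarrow> X = T"
  proof (rule subset_Zorn_nonempty)
    show "A \<noteq> {}"
      using ok con unfolding A_def by auto
  next
    fix C assume C: "C \<noteq> {}" "subset.chain A C"
    then have CA: "C \<subseteq> A"
      by (simp add: subset_chain_def)
    have "consistent_with M n [] (\<Union>C)"
      unfolding consistent_with_def
    proof (intro allI impI)
      fix F w assume F: "F \<subseteq> \<Union>C" "finite F" "\<forall>c\<in>F. 0 \<le> (w c :: real)"
      then obtain B where B: "B \<in> C" "F \<subseteq> B"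
        using finite_subset_Union_chain[OF F(2,1) C] by blast
      then have "consistent_with M n [] B"
        using CA unfolding A_def by auto
      then show "(INF bs\<in>tuples M n. \<Sum>c\<in>F. w c * (eval M (asg M (bs @ [])) (fst c) - snd c)) \<le> 0"
        using F B unfolding consistent_with_def by auto
    qed
    moreover have "\<Sigma> \<subseteq> \<Union>C" "\<forall>c\<in>\<Union>C. cond_ok L n 0 c"
      using C(1) CA unfolding A_def by auto
    ultimately show "\<Union>C \<in> A"
      unfolding A_def by blast
  qed
  then obtain T where T: "T \<in> A" "\<forall>X\<in>A. T \<subseteq> X \<longrightarrow> X = T"
    by blast
  then have "is_type L M n [] T"
    unfolding is_type_def A_def by auto
  then obtain bs where "bs \<in> tuples M n" "\<forall>c\<in>T. eval M (asg M (bs @ [])) (fst c) \<le> snd c"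
    using sat unfolding aleph0_saturated_def by (metis empty_set empty_subsetI)
  then show ?thesis
    using T(1) unfolding A_def by auto
qed

lemma inconsistent_imp_positive_combination:
  assumes S: "is_structure L M"
    and ok: "\<forall>c\<in>\<Sigma>. cond_ok L n 0 c" and inconsistent: "\<not> consistent_with M n [] \<Sigma>"
  obtains F w where "F \<subseteq> \<Sigma>" "finite F" "\<forall>c\<in>F. 0 \<le> (w c :: real)"
    and "\<And>bs. bs \<in> tuples M n \<Longrightarrow> 0 < (\<Sum>c\<in>F. w c * (eval M (asg M bs) (fst c) - snd c))"
proof -
  obtain F w where F: "F \<subseteq> \<Sigma>" "finite F" "\<forall>c\<in>F. 0 \<le> (w c :: real)"
    and pos: "0 < (INF bs\<in>tuples M n. \<Sum>c\<in>F. w c * (eval M (asg M bs) (fst c) - snd c))"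
    using inconsistent unfolding consistent_with_def by (auto simp: not_le)
  define g where "g bs = (\<Sum>c\<in>F. w c * (eval M (asg M bs) (fst c) - snd c))" for bs
  \<comment> \<open>\<open>g\<close> is the value of a formula, hence bounded below, so its \<open>INF\<close> is a genuine lower bound.\<close>
  have "\<forall>c\<in>F. cond_ok L n 0 c"
    using F(1) ok by blast
  then have summands: "\<forall>c\<in>F. wf_fml L (Plus (Scl (w c) (fst c)) (Scl (- (w c * snd c)) One)) \<and>
      fv (Plus (Scl (w c) (fst c)) (Scl (- (w c * snd c)) One)) \<subseteq> {..<n}"
    by (auto simp: cond_ok_def)
  obtain \<chi> where "wf_fml L \<chi>" "fv \<chi> \<subseteq> {..<n}"
    and \<chi>: "\<And>\<sigma>. eval M \<sigma> \<chi> = (\<Sum>c\<in>F. eval M \<sigma> (Plus (Scl (w c) (fst c)) (Scl (- (w c * snd c)) One)))"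
    using ex_fml_eval_sum[OF F(2) summands, where M = M] by blast
  have g_eval: "g bs = eval M (asg M bs) \<chi>" for bs
    unfolding g_def \<chi> by (simp add: right_diff_distrib)
  obtain B where B: "\<forall>\<sigma>. (\<forall>i. \<sigma> i \<in> carr M) \<longrightarrow> \<bar>eval M \<sigma> \<chi>\<bar> \<le> B"
    using eval_bounded[OF S \<open>wf_fml L \<chi>\<close>] by blast
  have "- B \<le> g bs" if "bs \<in> tuples M n" for bs
    using B[rule_format, of "asg M bs", OF asg_in_carr[OF S that]] by (simp add: g_eval abs_le_iff)
  then have "bdd_below (g ` tuples M n)"
    by (rule bdd_belowI2)
  then have g_pos: "0 < g bs" if "bs \<in> tuples M n" for bs
    using cINF_lower[OF _ that] pos unfolding g_def by (meson less_le_trans)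
  show ?thesis
    using F g_pos unfolding g_def by (rule that)
qed

lemma unrealized_imp_positive_combination:
  assumes S: "is_structure L M" and sat: "aleph0_saturated L M"
    and ok: "\<forall>i\<in>I. cond_ok L n 0 (cnd i)"
    and unrealized: "\<not> (\<exists>bs\<in>tuples M n. \<forall>i\<in>I. eval M (asg M bs) (fst (cnd i)) \<le> snd (cnd i))"
  obtains G w where "G \<subseteq> I" "finite G" "\<forall>i\<in>G. 0 \<le> (w i :: real)"
    and "\<And>bs. bs \<in> tuples M n \<Longrightarrow>
           0 < (\<Sum>i\<in>G. w i * (eval M (asg M bs) (fst (cnd i)) - snd (cnd i)))"
proof -
  have ok': "\<forall>c\<in>cnd ` I. cond_ok L n 0 c"
    using ok by blast
  have "\<not> consistent_with M n [] (cnd ` I)"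
  proof
    assume "consistent_with M n [] (cnd ` I)"
    then obtain bs where "bs \<in> tuples M n" "\<forall>c\<in>cnd ` I. eval M (asg M bs) (fst c) \<le> snd c"
      using aleph0_saturated_realizes_consistent[OF sat ok'] by blast
    with unrealized show False
      by auto
  qed
  then obtain F w where F: "F \<subseteq> cnd ` I" "finite F" "\<forall>c\<in>F. 0 \<le> (w c :: real)"
    and pos: "\<And>bs. bs \<in> tuples M n \<Longrightarrow> 0 < (\<Sum>c\<in>F. w c * (eval M (asg M bs) (fst c) - snd c))"
    using inconsistent_imp_positive_combination[OF S ok'] by blast
  obtain G where G: "G \<subseteq> I" "inj_on cnd G" "F = cnd ` G"
    using F(1) subset_image_inj by meson
  show ?thesis
  proof (rule that[of G "w \<circ> cnd"])
    show "finite G"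
      using F(2) G(2,3) finite_image_iff by blast
    show "\<forall>i\<in>G. 0 \<le> (w \<circ> cnd) i"
      using F(3) G(3) by simp
    fix bs assume "bs \<in> tuples M n"
    then show "0 < (\<Sum>i\<in>G. (w \<circ> cnd) i * (eval M (asg M bs) (fst (cnd i)) - snd (cnd i)))"
      using pos unfolding G(3) sum.reindex[OF G(2)] by simp
  qed (rule G(1))
qed

lemma convex_combination_bounds:
  fixes w f h :: "'i \<Rightarrow> real"
  assumes "\<forall>i\<in>G. 0 \<le> w i" and "\<forall>i\<in>G. f i \<le> p" and "\<forall>i\<in>G. h i \<le> - p"
    and pos: "0 < (\<Sum>i\<in>G. w i * (f i + h i + \<epsilon>))"
  shows "p - \<epsilon> < (\<Sum>i\<in>G. w i * f i) / (\<Sum>i\<in>G. w i)"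
    and "(\<Sum>i\<in>G. w i * f i) / (\<Sum>i\<in>G. w i) \<le> p"
proof -
  let ?W = "\<Sum>i\<in>G. w i"
  have "(\<Sum>i\<in>G. w i * f i) \<le> (\<Sum>i\<in>G. w i * p)"
    using assms(1,2) by (intro sum_mono mult_left_mono) auto
  then have f_le: "(\<Sum>i\<in>G. w i * f i) \<le> ?W * p"
    by (simp add: sum_distrib_right)
  have "(\<Sum>i\<in>G. w i * h i) \<le> (\<Sum>i\<in>G. w i * - p)"
    using assms(1,3) by (intro sum_mono mult_left_mono) auto
  then have h_le: "(\<Sum>i\<in>G. w i * h i) \<le> ?W * - p"
    by (simp only: sum_distrib_right)
  have "0 < (\<Sum>i\<in>G. w i * f i) + (\<Sum>i\<in>G. w i * h i) + ?W * \<epsilon>"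
    using pos by (simp add: distrib_left sum.distrib sum_distrib_right)
  with h_le have f_gt: "?W * (p - \<epsilon>) < (\<Sum>i\<in>G. w i * f i)"
    by (simp add: algebra_simps)
  have "0 \<le> ?W"
    using assms(1) by (simp add: sum_nonneg)
  moreover have "?W \<noteq> 0"
    using f_le f_gt by auto
  ultimately have "0 < ?W"
    by simp
  with f_le f_gt show "p - \<epsilon> < (\<Sum>i\<in>G. w i * f i) / ?W" and "(\<Sum>i\<in>G. w i * f i) / ?W \<le> p"
    by (simp_all add: field_simps)
qed

lemma definable_iff_uniform_approx:
  "definable L M n P \<longleftrightarrow>
     (\<forall>\<epsilon>>0. \<exists>\<chi>. wf_fml L \<chi> \<and> fv \<chi> \<subseteq> {..<n} \<and>
        (\<forall>xs\<in>tuples M n. \<bar>eval M (asg M xs) \<chi> - P xs\<bar> < \<epsilon>))"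
proof
  assume "definable L M n P"
  then show "\<forall>\<epsilon>>0. \<exists>\<chi>. wf_fml L \<chi> \<and> fv \<chi> \<subseteq> {..<n} \<and>
               (\<forall>xs\<in>tuples M n. \<bar>eval M (asg M xs) \<chi> - P xs\<bar> < \<epsilon>)"
    unfolding definable_def by blast
next
  assume approx: "\<forall>\<epsilon>>0. \<exists>\<chi>. wf_fml L \<chi> \<and> fv \<chi> \<subseteq> {..<n} \<and>
            (\<forall>xs\<in>tuples M n. \<bar>eval M (asg M xs) \<chi> - P xs\<bar> < \<epsilon>)"
  have "\<forall>k. \<exists>\<chi>. wf_fml L \<chi> \<and> fv \<chi> \<subseteq> {..<n} \<and>
      (\<forall>xs\<in>tuples M n. \<bar>eval M (asg M xs) \<chi> - P xs\<bar> < 1 / Suc k)"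
  proof
    fix k
    have "0 < 1 / real (Suc k)"
      by simp
    then show "\<exists>\<chi>. wf_fml L \<chi> \<and> fv \<chi> \<subseteq> {..<n} \<and>
        (\<forall>xs\<in>tuples M n. \<bar>eval M (asg M xs) \<chi> - P xs\<bar> < 1 / Suc k)"
      using approx by blast
  qed
  then obtain \<chi> where \<chi>: "\<forall>k. wf_fml L (\<chi> k) \<and> fv (\<chi> k) \<subseteq> {..<n} \<and>
      (\<forall>xs\<in>tuples M n. \<bar>eval M (asg M xs) (\<chi> k) - P xs\<bar> < 1 / Suc k)"
    by (rule choice[THEN exE])
  have "\<exists>K. \<forall>k\<ge>K. \<forall>xs\<in>tuples M n. \<bar>eval M (asg M xs) (\<chi> k) - P xs\<bar> < \<epsilon>"
    if "\<epsilon> > 0" for \<epsilon> :: real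
  proof -
    obtain K where K: "1 / Suc K < \<epsilon>"
      using nat_approx_posE[OF \<open>\<epsilon> > 0\<close>] by blast
    have "1 / Suc k < \<epsilon>" if "K \<le> k" for k
    proof -
      have "1 / real (Suc k) \<le> 1 / Suc K"
        using that by (intro divide_left_mono) auto
      then show ?thesis
        using K by linarith
    qed
    then show ?thesis
      using \<chi> by (meson less_trans)
  qed
  then show "definable L M n P"
    unfolding definable_def using \<chi> by blast
qed

lemma definable_uminus:
  assumes "definable L M n P"
  shows "definable L M n (\<lambda>xs. - P xs)"
  unfolding definable_iff_uniform_approx
proof (intro allI impI)
  fix \<epsilon> :: real assume "0 < \<epsilon>"
  then obtain \<chi> where "wf_fml L \<chi>" "fv \<chi> \<subseteq> {..<n}"
    and "\<forall>xs\<in>tuples M n. \<bar>eval M (asg M xs) \<chi> - P xs\<bar> < \<epsilon>"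
    using assms unfolding definable_iff_uniform_approx by blast
  then show "\<exists>\<chi>. wf_fml L \<chi> \<and> fv \<chi> \<subseteq> {..<n} \<and>
               (\<forall>xs\<in>tuples M n. \<bar>eval M (asg M xs) \<chi> - - P xs\<bar> < \<epsilon>)"
    by (intro exI[of _ "Scl (-1) \<chi>"]) (simp add: abs_minus_commute)
qed

definition sup_of_fmls :: "('a, 'f, 'r) struct \<Rightarrow> nat \<Rightarrow> ('f, 'r) afml set \<Rightarrow> ('a list \<Rightarrow> real) \<Rightarrow> bool" where
  "sup_of_fmls M n \<Phi> P \<longleftrightarrow>
     (\<forall>xs\<in>tuples M n. (\<forall>\<phi>\<in>\<Phi>. eval M (asg M xs) \<phi> \<le> P xs) \<and>
        (\<forall>\<delta>>0. \<exists>\<phi>\<in>\<Phi>. P xs - \<delta> < eval M (asg M xs) \<phi>))"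

lemma upper_bounds_eq_iff_approx_sup:
  fixes p :: real and v :: "'b \<Rightarrow> real"
  shows "(\<forall>r. p \<le> r \<longleftrightarrow> (\<forall>x\<in>X. v x \<le> r)) \<longleftrightarrow>
         (\<forall>x\<in>X. v x \<le> p) \<and> (\<forall>\<delta>>0. \<exists>x\<in>X. p - \<delta> < v x)"
proof
  assume H: "\<forall>r. p \<le> r \<longleftrightarrow> (\<forall>x\<in>X. v x \<le> r)"
  have "\<exists>x\<in>X. p - \<delta> < v x" if "0 < \<delta>" for \<delta>
    using H[rule_format, of "p - \<delta>"] that by (auto simp: not_le)
  then show "(\<forall>x\<in>X. v x \<le> p) \<and> (\<forall>\<delta>>0. \<exists>x\<in>X. p - \<delta> < v x)"
    using H by blast
next
  assume H: "(\<forall>x\<in>X. v x \<le> p) \<and> (\<forall>\<delta>>0. \<exists>x\<in>X. p - \<delta> < v x)"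
  have "p \<le> r" if "\<forall>x\<in>X. v x \<le> r" for r
  proof (rule ccontr)
    assume "\<not> p \<le> r"
    then obtain x where "x \<in> X" "p - (p - r) < v x"
      using H[THEN conjunct2, rule_format, of "p - r"] by auto
    with that show False
      by force
  qed
  then show "\<forall>r. p \<le> r \<longleftrightarrow> (\<forall>x\<in>X. v x \<le> r)"
    using H by force
qed

lemma type_definable_epigraph_iff_sup_of_fmls:
  "type_definable_epigraph L M n P \<longleftrightarrow>
     (\<exists>\<Phi>. (\<forall>\<phi>\<in>\<Phi>. wf_fml L \<phi> \<and> fv \<phi> \<subseteq> {..<n}) \<and> sup_of_fmls M n \<Phi> P)"
  unfolding type_definable_epigraph_def sup_of_fmls_def upper_bounds_eq_iff_approx_sup ..

lemma definable_imp_type_definable_epigraph: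
  assumes "definable L M n P"
  shows "type_definable_epigraph L M n P"
proof -
  define \<Phi> where "\<Phi> = {\<chi>. wf_fml L \<chi> \<and> fv \<chi> \<subseteq> {..<n} \<and>
                           (\<forall>xs\<in>tuples M n. eval M (asg M xs) \<chi> \<le> P xs)}"
  have wf: "\<forall>\<phi>\<in>\<Phi>. wf_fml L \<phi> \<and> fv \<phi> \<subseteq> {..<n}"
    by (simp add: \<Phi>_def)
  have approx: "\<exists>\<chi>\<in>\<Phi>. P xs - \<delta> < eval M (asg M xs) \<chi>"
    if xs: "xs \<in> tuples M n" and "0 < \<delta>" for xs \<delta>
  proof -
    obtain \<chi> where \<chi>: "wf_fml L \<chi>" "fv \<chi> \<subseteq> {..<n}"
      "\<forall>ys\<in>tuples M n. \<bar>eval M (asg M ys) \<chi> - P ys\<bar> < \<delta> / 2"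
      using assms half_gt_zero[OF \<open>0 < \<delta>\<close>] unfolding definable_iff_uniform_approx by blast
    have "eval M (asg M ys) \<chi> - \<delta> / 2 \<le> P ys" if "ys \<in> tuples M n" for ys
      using \<chi>(3)[rule_format, OF that] unfolding abs_less_iff by linarith
    with \<chi>(1,2) have "Plus \<chi> (Scl (- (\<delta> / 2)) One) \<in> \<Phi>"
      unfolding \<Phi>_def by simp
    moreover have "P xs - \<delta> < eval M (asg M xs) \<chi> - \<delta> / 2"
      using \<chi>(3)[rule_format, OF xs] unfolding abs_less_iff by linarith
    ultimately show ?thesis
      by force
  qed
  have "sup_of_fmls M n \<Phi> P"
    unfolding sup_of_fmls_def using approx by (auto simp: \<Phi>_def)
  with wf show ?thesis
    unfolding type_definable_epigraph_iff_sup_of_fmls by blast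
qed

lemma sup_of_fmls_uminus_gap:
  assumes "sup_of_fmls M n \<Phi> P" and "sup_of_fmls M n \<Psi> (\<lambda>xs. - P xs)"
    and "0 < \<epsilon>" and "xs \<in> tuples M n"
  shows "\<exists>\<phi>\<in>\<Phi>. \<exists>\<psi>\<in>\<Psi>. - \<epsilon> < eval M (asg M xs) \<phi> + eval M (asg M xs) \<psi>"
proof -
  obtain \<phi> where "\<phi> \<in> \<Phi>" "P xs - \<epsilon> / 2 < eval M (asg M xs) \<phi>"
    using assms(1,4) half_gt_zero[OF assms(3)] unfolding sup_of_fmls_def by blast
  moreover obtain \<psi> where "\<psi> \<in> \<Psi>" "- P xs - \<epsilon> / 2 < eval M (asg M xs) \<psi>"
    using assms(2,4) half_gt_zero[OF assms(3)] unfolding sup_of_fmls_def by blast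
  ultimately show ?thesis
    by force
qed

lemma positive_combination_imp_approx:
  assumes G: "G \<subseteq> \<Phi> \<times> \<Psi>" "finite G" "\<forall>i\<in>G. 0 \<le> (w i :: real)"
    and \<Phi>: "\<forall>\<phi>\<in>\<Phi>. wf_fml L \<phi> \<and> fv \<phi> \<subseteq> {..<n}"
    and sup_\<Phi>: "sup_of_fmls M n \<Phi> P" and sup_\<Psi>: "sup_of_fmls M n \<Psi> (\<lambda>xs. - P xs)"
    and pos: "\<And>xs. xs \<in> tuples M n \<Longrightarrow>
      0 < (\<Sum>i\<in>G. w i * (eval M (asg M xs) (fst i) + eval M (asg M xs) (snd i) + \<epsilon>))"
  obtains \<chi> where "wf_fml L \<chi>" "fv \<chi> \<subseteq> {..<n}"
    "\<forall>xs\<in>tuples M n. \<bar>eval M (asg M xs) \<chi> - P xs\<bar> < \<epsilon>"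
proof -
  define W where "W = (\<Sum>i\<in>G. w i)"
  have "\<forall>i\<in>G. fst i \<in> \<Phi>"
    using G(1) by auto
  then have summands: "\<forall>i\<in>G. wf_fml L (Scl (w i / W) (fst i)) \<and> fv (Scl (w i / W) (fst i)) \<subseteq> {..<n}"
    using \<Phi> by simp
  obtain \<chi> where "wf_fml L \<chi>" "fv \<chi> \<subseteq> {..<n}"
    and \<chi>: "\<And>\<sigma>. eval M \<sigma> \<chi> = (\<Sum>i\<in>G. eval M \<sigma> (Scl (w i / W) (fst i)))"
    using ex_fml_eval_sum[OF G(2) summands, where M = M] by blast
  moreover have "\<bar>eval M (asg M xs) \<chi> - P xs\<bar> < \<epsilon>" if xs: "xs \<in> tuples M n" for xs
  proof -
    have "eval M (asg M xs) \<chi> = (\<Sum>i\<in>G. w i * eval M (asg M xs) (fst i)) / W"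
      unfolding \<chi> by (simp add: sum_divide_distrib)
    moreover have "\<forall>i\<in>G. eval M (asg M xs) (fst i) \<le> P xs" "\<forall>i\<in>G. eval M (asg M xs) (snd i) \<le> - P xs"
      using G(1) sup_\<Phi> sup_\<Psi> xs unfolding sup_of_fmls_def by auto
    ultimately show ?thesis
      using convex_combination_bounds[OF G(3), of "\<lambda>i. eval M (asg M xs) (fst i)" "P xs"
          "\<lambda>i. eval M (asg M xs) (snd i)"] pos[OF xs]
      unfolding W_def by (fastforce simp: abs_less_iff)
  qed
  ultimately show ?thesis
    using that by blast
qed

lemma type_definable_epigraphs_imp_approx:
  fixes L :: "('f, 'r) lang" and M :: "('a, 'f, 'r) struct"
  assumes S: "is_structure L M" and sat: "aleph0_saturated L M"
    and "type_definable_epigraph L M n P" "type_definable_epigraph L M n (\<lambda>xs. - P xs)"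
    and "0 < \<epsilon>"
  obtains \<chi> where "wf_fml L \<chi>" "fv \<chi> \<subseteq> {..<n}"
    "\<forall>xs\<in>tuples M n. \<bar>eval M (asg M xs) \<chi> - P xs\<bar> < \<epsilon>"
proof -
  obtain \<Phi> where \<Phi>: "\<forall>\<phi>\<in>\<Phi>. wf_fml L \<phi> \<and> fv \<phi> \<subseteq> {..<n}" and sup_\<Phi>: "sup_of_fmls M n \<Phi> P"
    using assms(3) unfolding type_definable_epigraph_iff_sup_of_fmls by blast
  obtain \<Psi> where \<Psi>: "\<forall>\<psi>\<in>\<Psi>. wf_fml L \<psi> \<and> fv \<psi> \<subseteq> {..<n}"
    and sup_\<Psi>: "sup_of_fmls M n \<Psi> (\<lambda>xs. - P xs)"
    using assms(4) unfolding type_definable_epigraph_iff_sup_of_fmls by blast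
  define cnd where "cnd i = (Plus (fst i) (snd i), - \<epsilon>)" for i :: "('f, 'r) afml \<times> ('f, 'r) afml"
  have ok: "\<forall>i\<in>\<Phi> \<times> \<Psi>. cond_ok L n 0 (cnd i)"
    using \<Phi> \<Psi> by (auto simp: cnd_def cond_ok_def)
  have unrealized: "\<not> (\<exists>bs\<in>tuples M n. \<forall>i\<in>\<Phi> \<times> \<Psi>. eval M (asg M bs) (fst (cnd i)) \<le> snd (cnd i))"
  proof
    assume "\<exists>bs\<in>tuples M n. \<forall>i\<in>\<Phi> \<times> \<Psi>. eval M (asg M bs) (fst (cnd i)) \<le> snd (cnd i)"
    then obtain bs where bs: "bs \<in> tuples M n"
      and "\<forall>\<phi>\<in>\<Phi>. \<forall>\<psi>\<in>\<Psi>. eval M (asg M bs) \<phi> + eval M (asg M bs) \<psi> \<le> - \<epsilon>"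
      unfolding cnd_def by auto
    with sup_of_fmls_uminus_gap[OF sup_\<Phi> sup_\<Psi> \<open>0 < \<epsilon>\<close> bs] show False
      by fastforce
  qed
  obtain G w where G: "G \<subseteq> \<Phi> \<times> \<Psi>" "finite G" "\<forall>i\<in>G. 0 \<le> (w i :: real)"
    and pos: "\<And>bs. bs \<in> tuples M n \<Longrightarrow>
      0 < (\<Sum>i\<in>G. w i * (eval M (asg M bs) (fst (cnd i)) - snd (cnd i)))"
    using unrealized_imp_positive_combination[OF S sat ok unrealized] by blast
  have "0 < (\<Sum>i\<in>G. w i * (eval M (asg M xs) (fst i) + eval M (asg M xs) (snd i) + \<epsilon>))"
    if "xs \<in> tuples M n" for xs
    using pos[OF that] by (simp add: cnd_def add.assoc)
  from positive_combination_imp_approx[OF G \<Phi> sup_\<Phi> sup_\<Psi> this] show ?thesis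
    using that by blast
qed

theorem mainTheorem12:
  fixes L :: "('f, 'r) lang" and M :: "('a, 'f, 'r) struct"
    and n :: nat and P :: "'a list \<Rightarrow> real"
  assumes "is_structure L M"
    and "aleph0_saturated L M"
  shows "definable L M n P \<longleftrightarrow>
           type_definable_epigraph L M n P \<and> type_definable_epigraph L M n (\<lambda>xs. - P xs)"
proof
  assume "definable L M n P"
  then show "type_definable_epigraph L M n P \<and> type_definable_epigraph L M n (\<lambda>xs. - P xs)"
    using definable_imp_type_definable_epigraph definable_uminus by blast
next
  assume "type_definable_epigraph L M n P \<and> type_definable_epigraph L M n (\<lambda>xs. - P xs)"
  then show "definable L M n P"
    unfolding definable_iff_uniform_approx
    using type_definable_epigraphs_imp_approx[OF assms] by blast
qed

end
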